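(* Let $2\le n<d$ with $n=2$ or $n$ odd, and let $t$ be as defined below. Then there exists $E\in\mathrm{SL}(d,q)$ such that $T:=E^{-1}tE$ is a weak doubling element.
   Context: Vectors are row vectors and matrices act from the right; $\mathrm{Fix}(g)=\{x\in\mathbb{F}_q^d: xg=x\}$. $e_1,\dots,e_d$ is the standard basis of $V=\mathbb{F}_q^d$, $V_n=\langle e_1,\dots,e_n\rangle$, $F_{d-n}=\langle e_{n+1},\dots,e_d\rangle$, and $n'=\min\{2n-1,d\}$. An element $c\in\mathrm{GL}(d,q)$ is a weak doubling element if (C1) $\dim(V_n+V_nc)=n'$ and (C2) if $n'<d$ then $\dim(F_{d-n}+\mathrm{Fix}(c))=d$. $E_{i,j}(\lambda)$ is the identity matrix with $(i,j)$ entry replaced by $\lambda$ ($i\ne j$). Here $q=p^f$. The element $t$ is: $E_{1,2}(1)$ if $n=2$; $\operatorname{diag}(z_1,I_{d-n})$ if $n>2$ and $p=2$; $\operatorname{diag}(z_2,I_{d-n})$ if $n>2$ and $p$ odd, where ($P_\sigma$ being the $n\times n$ matrix with $e_iP_\sigma=e_{\sigma(i)}$) $z_1=P_{(1,n,n-1,\dots,2)}$ with $(1,n)$ entry changed to $-1$ if $n$ is even, and $z_2=P_{(2,n,n-1,\dots,3)}$ with $(2,n)$ entry changed to $-1$ if $n$ is odd. *)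

theory Defs
  imports "Jordan_Normal_Form.Gauss_Jordan_Elimination" "Jordan_Normal_Form.VS_Connect"
    "Jordan_Normal_Form.Determinant"
begin

(* Indices are 0-based: the paper's e_i is unit_vec d (i-1). *)

text \<open>Row vector times matrix: x g (matrices act from the right).\<close>
definition rmult :: "'a::field vec \<Rightarrow> 'a mat \<Rightarrow> 'a vec" where
  "rmult x g = transpose_mat g *\<^sub>v x"

definition span_d :: "nat \<Rightarrow> 'a::field vec set \<Rightarrow> 'a vec set" where
  "span_d d S = LinearCombinations.module.span class_ring (module_vec TYPE('a) d) S"

definition subdim :: "nat \<Rightarrow> 'a::field vec set \<Rightarrow> nat" where
  "subdim d W = vectorspace.dim class_ring ((module_vec TYPE('a) d)\<lparr>carrier := W\<rparr>)"

definition subsum :: "'a::field vec set \<Rightarrow> 'a vec set \<Rightarrow> 'a vec set" where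
  "subsum U W = {u + w | u w. u \<in> U \<and> w \<in> W}"

definition Vsub :: "nat \<Rightarrow> nat \<Rightarrow> 'a::field vec set" where
  "Vsub d n = span_d d (set (map (unit_vec d) [0..<n]))"

definition Fsub :: "nat \<Rightarrow> nat \<Rightarrow> 'a::field vec set" where
  "Fsub d n = span_d d (set (map (unit_vec d) [n..<d]))"

definition Fix :: "nat \<Rightarrow> 'a::field mat \<Rightarrow> 'a vec set" where
  "Fix d g = {x \<in> carrier_vec d. rmult x g = x}"

definition weak_doubling :: "nat \<Rightarrow> nat \<Rightarrow> 'a::field mat \<Rightarrow> bool" where
  "weak_doubling d n c \<longleftrightarrow>
     (let n' = min (2*n - 1) d in
      subdim d (subsum (Vsub d n) ((\<lambda>x. rmult x c) ` Vsub d n)) = n' \<and>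
      (n' < d \<longrightarrow> subdim d (subsum (Fsub d n) (Fix d c)) = d))"

definition Eij :: "nat \<Rightarrow> nat \<Rightarrow> nat \<Rightarrow> 'a::field \<Rightarrow> 'a mat" where
  "Eij d i j l = mat d d (\<lambda>(a,b). if a = i \<and> b = j then l else if a = b then 1 else 0)"

text \<open>Permutation matrix with e_i P = e_{sigma(i)}: row i has its 1 in column sigma(i).\<close>
definition perm_mat :: "nat \<Rightarrow> (nat \<Rightarrow> nat) \<Rightarrow> 'a::field mat" where
  "perm_mat n \<sigma> = mat n n (\<lambda>(i,j). if j = \<sigma> i then 1 else 0)"

text \<open>Cycle (1,n,n-1,...,2) in 0-based form: 0 -> n-1, k -> k-1 for 1<=k<n.\<close>
definition cyc1 :: "nat \<Rightarrow> nat \<Rightarrow> nat" where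
  "cyc1 n i = (if i = 0 then n - 1 else i - 1)"

text \<open>Cycle (2,n,n-1,...,3) in 0-based form: 0 fixed, 1 -> n-1, k -> k-1 for 2<=k<n.\<close>
definition cyc2 :: "nat \<Rightarrow> nat \<Rightarrow> nat" where
  "cyc2 n i = (if i = 0 then 0 else if i = 1 then n - 1 else i - 1)"

definition z1 :: "nat \<Rightarrow> 'a::field mat" where
  "z1 n = (if even n then update_mat (perm_mat n (cyc1 n)) (0, n - 1) (-1) else perm_mat n (cyc1 n))"

definition z2 :: "nat \<Rightarrow> 'a::field mat" where
  "z2 n = (if odd n then update_mat (perm_mat n (cyc2 n)) (1, n - 1) (-1) else perm_mat n (cyc2 n))"

definition blockdiag_id :: "nat \<Rightarrow> nat \<Rightarrow> 'a::field mat \<Rightarrow> 'a mat" where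
  "blockdiag_id d n z = four_block_mat z (0\<^sub>m n (d - n)) (0\<^sub>m (d - n) n) (1\<^sub>m (d - n))"

definition t_elem :: "nat \<Rightarrow> nat \<Rightarrow> 'a::{field,finite} mat" where
  "t_elem d n = (if n = 2 then Eij d 0 1 1
     else if CHAR('a) = 2 then blockdiag_id d n (z1 n)
     else blockdiag_id d n (z2 n))"

end

theory Submission
  imports Defs "Jordan_Normal_Form.DL_Rank"
begin

(* Take E = (1 - U)(1 - D), where (0-based) e_i U = e_{n+i-1} for 1 \<le> i < n and
   e_{n+i} D = e_i for i < n; both factors are unitriangular, so det E = 1.
   Since t = diag(z, I) stabilises V_n and fixes F_{d-n} pointwise, for x \<in> V_n one computes
   xT = xt - w + wD with w = (xt - x)U. Hence V_n + V_n T is V_n plus the U-images of the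
   differences xt - x. For the given t the differences e_i t - e_i span <e_1, ..., e_{n-1}>
   (for z_2 only because 2 \<noteq> 0), whose U-image is <e_n, ..., e_{2n-2}>; so V_n + V_n T = V_{n'}.
   For (C2), every v is (v - y) + y with y = (v_0, ..., v_{n-1}, -v_0, ..., -v_{n-1}, 0, ...):
   v - y \<in> F_{d-n}, and y = hE for h supported on the coordinates n, ..., 2n-1, which t fixes,
   so y \<in> Fix(T). *)

lemma rmult_carrier [simp]: "M \<in> carrier_mat d d \<Longrightarrow> rmult x M \<in> carrier_vec d"
  unfolding rmult_def carrier_vec_def by auto

lemma dim_rmult [simp]: "dim_vec (rmult x M) = dim_col M"
  unfolding rmult_def by simp

lemma rmult_index:
  assumes "M \<in> carrier_mat d d" "x \<in> carrier_vec d" "j < d"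
  shows "rmult x M $ j = (\<Sum>i<d. M $$ (i,j) * x $ i)"
  using assms unfolding rmult_def
  by (auto simp: scalar_prod_def atLeast0LessThan mult.commute intro!: sum.cong)

lemma rmult_add:
  assumes "M \<in> carrier_mat d d" "x \<in> carrier_vec d" "y \<in> carrier_vec d"
  shows "rmult (x + y) M = rmult x M + rmult y M"
  using assms unfolding rmult_def by (auto simp: mult_add_distrib_mat_vec)

lemma rmult_smult:
  assumes "M \<in> carrier_mat d d" "x \<in> carrier_vec d"
  shows "rmult (c \<cdot>\<^sub>v x) M = c \<cdot>\<^sub>v rmult x M"
  using assms unfolding rmult_def by (auto simp: mult_mat_vec)

lemma rmult_mult:
  assumes "M \<in> carrier_mat d d" "N \<in> carrier_mat d d" "x \<in> carrier_vec d"
  shows "rmult x (M * N) = rmult (rmult x M) N"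
  using assms unfolding rmult_def by (simp add: transpose_mult[of M d d N d])

lemma rmult_one [simp]: "x \<in> carrier_vec d \<Longrightarrow> rmult x (1\<^sub>m d) = x"
  unfolding rmult_def by auto

lemma rmult_add_mat:
  assumes "M \<in> carrier_mat d d" "N \<in> carrier_mat d d" "x \<in> carrier_vec d"
  shows "rmult x (M + N) = rmult x M + rmult x N"
  using assms unfolding rmult_def by (simp add: transpose_add add_mult_distrib_mat_vec[of _ d d])

lemma rmult_minus_mat:
  assumes "M \<in> carrier_mat d d" "N \<in> carrier_mat d d" "x \<in> carrier_vec d"
  shows "rmult x (M - N) = rmult x M - rmult x N"
  using assms unfolding rmult_def by (simp add: transpose_minus minus_mult_distrib_mat_vec[of _ d d])

lemma rmult_unit_vec:
  assumes "M \<in> carrier_mat d d" "i < d"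
  shows "rmult (unit_vec d i) M = row M i"
  using assms unfolding rmult_def by (intro eq_vecI) auto

lemma mat_eq_rmultI:
  assumes "M \<in> carrier_mat d d" "N \<in> carrier_mat d d"
    and "\<And>x. x \<in> carrier_vec d \<Longrightarrow> rmult x M = rmult x N"
  shows "M = N"
proof (rule eq_rowI)
  fix i assume "i < dim_row N"
  then show "row M i = row N i"
    using assms rmult_unit_vec[of M d i] rmult_unit_vec[of N d i] by auto
qed (use assms in auto)

lemma the_mat_inverse_eqI:
  fixes A B :: "'a::field mat"
  assumes A: "A \<in> carrier_mat n n" and B: "B \<in> carrier_mat n n" and BA: "B * A = 1\<^sub>m n"
  shows "the (mat_inverse A) = B"
proof -
  have "det B * det A = 1" using det_mult[OF B A] BA by simp
  then have "A \<in> Units (ring_mat TYPE('a) n undefined)"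
    by (intro det_non_zero_imp_unit[OF A]) auto
  then obtain C where C: "mat_inverse A = Some C"
    using mat_inverse(1)[OF A] by fastforce
  then have AC: "A * C = 1\<^sub>m n" and Cc: "C \<in> carrier_mat n n"
    using mat_inverse(2)[OF A] by auto
  have "B = (B * A) * C" using assoc_mult_mat[OF B A Cc] AC B by simp
  then show ?thesis using BA Cc C by simp
qed

definition shift_up :: "nat \<Rightarrow> nat \<Rightarrow> 'a::field vec \<Rightarrow> 'a vec" where
  "shift_up d n x = vec d (\<lambda>j. if n \<le> j \<and> j < 2 * n - 1 then x $ (j + 1 - n) else 0)"

definition shift_down :: "nat \<Rightarrow> nat \<Rightarrow> 'a::field vec \<Rightarrow> 'a vec" where
  "shift_down d n x = vec d (\<lambda>j. if j < n \<and> n + j < d then x $ (n + j) else 0)"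

definition shift_up_mat :: "nat \<Rightarrow> nat \<Rightarrow> 'a::field mat" where
  "shift_up_mat d n = mat d d (\<lambda>(i, j). if 1 \<le> i \<and> i < n \<and> j = n + i - 1 then 1 else 0)"

definition shift_down_mat :: "nat \<Rightarrow> nat \<Rightarrow> 'a::field mat" where
  "shift_down_mat d n = mat d d (\<lambda>(i, j). if n \<le> i \<and> i < 2 * n \<and> j = i - n then 1 else 0)"

definition conjugator :: "nat \<Rightarrow> nat \<Rightarrow> 'a::field mat" where
  "conjugator d n = (1\<^sub>m d - shift_up_mat d n) * (1\<^sub>m d - shift_down_mat d n)"

definition conjugator_inv :: "nat \<Rightarrow> nat \<Rightarrow> 'a::field mat" where
  "conjugator_inv d n = (1\<^sub>m d + shift_down_mat d n) * (1\<^sub>m d + shift_up_mat d n)"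

lemma dim_shift_up [simp]: "dim_vec (shift_up d n x) = d"
  and dim_shift_down [simp]: "dim_vec (shift_down d n x) = d"
  by (simp_all add: shift_up_def shift_down_def)

lemma shift_up_carrier [simp]: "shift_up d n x \<in> carrier_vec d"
  and shift_down_carrier [simp]: "shift_down d n x \<in> carrier_vec d"
  and shift_up_mat_carrier [simp]: "shift_up_mat d n \<in> carrier_mat d d"
  and shift_down_mat_carrier [simp]: "shift_down_mat d n \<in> carrier_mat d d"
  and conjugator_carrier [simp]: "conjugator d n \<in> carrier_mat d d"
  and conjugator_inv_carrier [simp]: "conjugator_inv d n \<in> carrier_mat d d"
  by (auto simp: shift_up_def shift_down_def shift_up_mat_def shift_down_mat_def
      conjugator_def conjugator_inv_def)

lemma rmult_shift_up_mat:
  assumes "x \<in> carrier_vec d" "1 \<le> n"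
  shows "rmult x (shift_up_mat d n) = shift_up d n x"
proof (rule eq_vecI)
  fix j assume "j < dim_vec (shift_up d n x)"
  then have j: "j < d" by (simp add: shift_up_def)
  have "rmult x (shift_up_mat d n) $ j
      = (\<Sum>i<d. if i = j + 1 - n \<and> n \<le> j \<and> j < 2 * n - 1 then x $ i else 0)"
    using assms j by (subst rmult_index[of _ d]) (auto simp: shift_up_mat_def intro!: sum.cong)
  also have "\<dots> = shift_up d n x $ j"
    using j by (auto simp: shift_up_def)
  finally show "rmult x (shift_up_mat d n) $ j = shift_up d n x $ j" .
qed (simp add: shift_up_def shift_up_mat_def)

lemma rmult_shift_down_mat:
  assumes "x \<in> carrier_vec d"
  shows "rmult x (shift_down_mat d n) = shift_down d n x"
proof (rule eq_vecI)
  fix j assume "j < dim_vec (shift_down d n x)"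
  then have j: "j < d" by (simp add: shift_down_def)
  have "rmult x (shift_down_mat d n) $ j
      = (\<Sum>i<d. if i = n + j \<and> j < n then x $ i else 0)"
    using assms j by (subst rmult_index[of _ d]) (auto simp: shift_down_mat_def intro!: sum.cong)
  also have "\<dots> = shift_down d n x $ j"
    using j by (auto simp: shift_down_def)
  finally show "rmult x (shift_down_mat d n) $ j = shift_down d n x $ j" .
qed (simp add: shift_down_def shift_down_mat_def)

lemma rmult_conjugator:
  assumes "x \<in> carrier_vec d" "1 \<le> n"
  shows "rmult x (conjugator d n) = (x - shift_up d n x) - shift_down d n (x - shift_up d n x)"
  using assms unfolding conjugator_def
  by (simp add: rmult_mult[of _ d] rmult_minus_mat[of _ d] minus_carrier_mat rmult_shift_up_mat rmult_shift_down_mat)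

lemma rmult_conjugator_inv:
  assumes "x \<in> carrier_vec d" "1 \<le> n"
  shows "rmult x (conjugator_inv d n) = (x + shift_down d n x) + shift_up d n (x + shift_down d n x)"
  using assms unfolding conjugator_inv_def
  by (simp add: rmult_mult[of _ d] rmult_add_mat[of _ d] add_carrier_mat rmult_shift_up_mat rmult_shift_down_mat)

lemma conjugator_inv_mult_conjugator:
  assumes "1 \<le> n"
  shows "conjugator_inv d n * conjugator d n = (1\<^sub>m d :: 'a::field mat)"
proof (rule mat_eq_rmultI[of _ d])
  fix x :: "'a vec" assume x: "x \<in> carrier_vec d"
  then show "rmult x (conjugator_inv d n * conjugator d n) = rmult x (1\<^sub>m d)"
    using assms
    by (simp add: rmult_mult[of _ d] rmult_conjugator rmult_conjugator_inv)
      (intro eq_vecI, auto simp: shift_up_def shift_down_def)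
qed (auto intro: mult_carrier_mat[of _ d d])

lemma det_conjugator:
  assumes "2 \<le> n"
  shows "det (conjugator d n :: 'a::field mat) = 1"
proof -
  let ?U = "1\<^sub>m d - shift_up_mat d n :: 'a mat" and ?D = "1\<^sub>m d - shift_down_mat d n :: 'a mat"
  have U: "?U \<in> carrier_mat d d" and D: "?D \<in> carrier_mat d d"
    by (simp_all add: minus_carrier_mat)
  have diag: "diag_mat ?U = replicate d 1" "diag_mat ?D = replicate d 1"
    using assms by (auto simp: diag_mat_def shift_up_mat_def shift_down_mat_def intro!: nth_equalityI)
  have "upper_triangular ?U"
    using assms by (auto simp: upper_triangular_def shift_up_mat_def)
  then have "det ?U = 1" using det_upper_triangular[OF _ U] diag by simp
  moreover have "det ?D = 1"
    using diag by (subst det_lower_triangular[OF _ D]) (auto simp: shift_down_mat_def)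
  ultimately show ?thesis
    unfolding conjugator_def by (simp add: det_mult[OF U D])
qed

lemma mat_inverse_conjugator:
  "2 \<le> n \<Longrightarrow> the (mat_inverse (conjugator d n)) = (conjugator_inv d n :: 'a::field mat)"
  by (rule the_mat_inverse_eqI[of _ d]) (auto simp: conjugator_inv_mult_conjugator)

definition coord_subspace :: "nat \<Rightarrow> nat \<Rightarrow> 'a::field vec set" where
  "coord_subspace d k = {v \<in> carrier_vec d. \<forall>j<d. k \<le> j \<longrightarrow> v $ j = 0}"

lemma span_d_unit_vecs:
  assumes I: "I \<subseteq> {..<d}"
  shows "span_d d (unit_vec d ` I :: 'a::field vec set)
    = {v \<in> carrier_vec d. \<forall>j<d. j \<notin> I \<longrightarrow> v $ j = 0}"
proof -
  interpret V: vec_space "TYPE('a)" d .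
  let ?U = "unit_vec d ` I :: 'a vec set"
  have finI: "finite I" using I finite_subset by blast
  then have fin: "finite ?U" by simp
  have U: "?U \<subseteq> carrier_vec d" by auto
  have inj: "inj_on (unit_vec d) I" using I by (auto simp: inj_on_def)
  have lincomb: "V.lincomb a ?U $ j = (if j \<in> I then a (unit_vec d j) else 0)" if "j < d" for a j
  proof -
    have "V.lincomb a ?U $ j = (\<Sum>i\<in>I. a (unit_vec d i) * unit_vec d i $ j)"
      using V.lincomb_index[OF that U] sum.reindex[OF inj] by simp
    also have "\<dots> = (\<Sum>i\<in>I. if i = j then a (unit_vec d j) else 0)"
      using I that by (intro sum.cong) auto
    finally show ?thesis using finI by simp
  qed
  have "V.span ?U = {v \<in> carrier_vec d. \<forall>j<d. j \<notin> I \<longrightarrow> v $ j = 0}"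
  proof (intro equalityI subsetI)
    fix v assume "v \<in> V.span ?U"
    then obtain a where "v = V.lincomb a ?U"
      using V.finite_span[OF fin U] by auto
    then show "v \<in> {v \<in> carrier_vec d. \<forall>j<d. j \<notin> I \<longrightarrow> v $ j = 0}"
      using lincomb V.lincomb_closed[OF U] by auto
  next
    fix v :: "'a vec" assume v: "v \<in> {v \<in> carrier_vec d. \<forall>j<d. j \<notin> I \<longrightarrow> v $ j = 0}"
    have "V.lincomb (\<lambda>u. u \<bullet> v) ?U = v"
      using v lincomb I V.lincomb_closed[OF U] by (intro eq_vecI) auto
    then show "v \<in> V.span ?U"
      unfolding V.finite_span[OF fin U] by (intro CollectI exI[of _ "\<lambda>u. u \<bullet> v"]) auto
  qed
  then show ?thesis unfolding span_d_def .
qed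

lemma Vsub_eq_coord_subspace:
  assumes "k \<le> d"
  shows "Vsub d k = coord_subspace d k"
proof -
  have "Vsub d k = {v \<in> carrier_vec d. \<forall>j<d. j \<notin> {0..<k} \<longrightarrow> v $ j = 0}"
    unfolding Vsub_def using span_d_unit_vecs[of "{0..<k}" d] assms by force
  then show ?thesis unfolding coord_subspace_def by auto
qed

lemma Fsub_eq:
  assumes "n \<le> d"
  shows "Fsub d n = {v \<in> carrier_vec d. \<forall>j<n. v $ j = 0}"
proof -
  have "Fsub d n = {v \<in> carrier_vec d. \<forall>j<d. j \<notin> {n..<d} \<longrightarrow> v $ j = 0}"
    unfolding Fsub_def using span_d_unit_vecs[of "{n..<d}" d] by force
  then show ?thesis using assms by auto
qed

lemma subdim_coord_subspace:
  assumes "k \<le> d"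
  shows "subdim d (coord_subspace d k :: 'a::field vec set) = k"
proof -
  interpret V: vec_space "TYPE('a)" d .
  let ?U = "unit_vec d ` {0..<k} :: 'a vec set"
  have U: "?U \<subseteq> carrier_vec d" by auto
  have "?U \<subseteq> set (unit_vecs d)" using assms by (auto simp: unit_vecs_def)
  then have "V.lin_indpt ?U"
    using V.unit_vecs_basis V.subset_li_is_li unfolding V.basis_def by blast
  then have "vectorspace.dim class_ring (V.span_vs ?U) = card ?U"
    by (intro V.dim_span[OF U]) (auto simp: maximal_def)
  also have "\<dots> = k"
    using assms card_image[of "unit_vec d" "{0..<k}"] by (auto simp: inj_on_def)
  finally show ?thesis
    using Vsub_eq_coord_subspace[OF assms, where 'a = 'a]
    unfolding subdim_def Vsub_def span_d_def by simp
qed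

lemma unit_vec_in_coord_subspace [simp]:
  "i < k \<Longrightarrow> i < d \<Longrightarrow> unit_vec d i \<in> coord_subspace d k"
  by (simp add: coord_subspace_def)

lemma coord_subspace_mono: "k \<le> m \<Longrightarrow> coord_subspace d k \<subseteq> coord_subspace d m"
  by (auto simp: coord_subspace_def)

lemma coord_subspace_Suc:
  assumes "v \<in> coord_subspace d (Suc k)" "k < d"
  shows "v - v $ k \<cdot>\<^sub>v unit_vec d k \<in> coord_subspace d k"
  using assms by (auto simp: coord_subspace_def)

lemma shift_up_unit_vec:
  assumes "1 \<le> i" "i < n" "n + i - 1 < d"
  shows "shift_up d n (unit_vec d i) = unit_vec d (n + i - 1)"
  using assms by (intro eq_vecI) (auto simp: shift_up_def)

locale block_diag_identity =
  fixes d n :: nat and t :: "'a::field mat"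
  assumes n_ge_2: "2 \<le> n" and n_less_d: "n < d" and t_carrier: "t \<in> carrier_mat d d"
    and t_upper_right: "\<And>i j. i < n \<Longrightarrow> n \<le> j \<Longrightarrow> j < d \<Longrightarrow> t $$ (i, j) = 0"
    and t_lower_rows: "\<And>i j. n \<le> i \<Longrightarrow> i < d \<Longrightarrow> j < d \<Longrightarrow> t $$ (i, j) = (if i = j then 1 else 0)"
begin

lemma rmult_t_in_coord_subspace:
  assumes x: "x \<in> coord_subspace d n"
  shows "rmult x t \<in> coord_subspace d n"
proof -
  have "rmult x t $ j = 0" if "n \<le> j" "j < d" for j
    using that x t_carrier t_upper_right
    by (subst rmult_index[of _ d]) (auto simp: coord_subspace_def intro!: sum.neutral)
  then show ?thesis using t_carrier by (auto simp: coord_subspace_def)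
qed

lemma rmult_t_eq_self:
  assumes x: "x \<in> carrier_vec d" "\<forall>j<n. x $ j = 0"
  shows "rmult x t = x"
proof (rule eq_vecI)
  fix j assume "j < dim_vec x"
  then have j: "j < d" using x by simp
  have "rmult x t $ j = (\<Sum>i<d. t $$ (i, j) * x $ i)"
    using x j t_carrier by (simp add: rmult_index)
  also have "\<dots> = (\<Sum>i<d. if i = j then x $ j else 0)"
  proof (rule sum.cong)
    fix i assume "i \<in> {..<d}"
    then show "t $$ (i, j) * x $ i = (if i = j then x $ j else 0)"
      using x j t_lower_rows[of i j] by (cases "i < n") auto
  qed simp
  finally show "rmult x t $ j = x $ j" using j by simp
qed (use x t_carrier in auto)

definition T :: "'a mat" where
  "T = conjugator_inv d n * t * conjugator d n"

definition V_plus_VT :: "'a vec set" where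
  "V_plus_VT = subsum (coord_subspace d n) ((\<lambda>x. rmult x T) ` coord_subspace d n)"

lemma T_carrier [simp]: "T \<in> carrier_mat d d"
  unfolding T_def using t_carrier by (meson conjugator_carrier conjugator_inv_carrier mult_carrier_mat)

lemma dim_col_T [simp]: "dim_col T = d"
  using T_carrier by blast

lemma rmult_T_on_coord_subspace:
  assumes x: "x \<in> coord_subspace d n"
  defines "w \<equiv> shift_up d n (rmult x t - x)"
  shows "rmult x T = rmult x t - w + shift_down d n w"
proof -
  let ?y = "rmult x t"
  have xc: "x \<in> carrier_vec d" and y: "?y \<in> coord_subspace d n"
    using x rmult_t_in_coord_subspace by (auto simp: coord_subspace_def)
  have "rmult x (conjugator_inv d n) = x + shift_up d n x"
    using x n_ge_2 by (subst rmult_conjugator_inv) (auto simp: coord_subspace_def shift_up_def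
        shift_down_def intro!: eq_vecI)
  moreover have "rmult (shift_up d n x) t = shift_up d n x"
    using n_less_d by (intro rmult_t_eq_self) (auto simp: shift_up_def)
  then have "rmult (x + shift_up d n x) t = ?y + shift_up d n x"
    using xc t_carrier by (simp add: rmult_add)
  moreover have "rmult (?y + shift_up d n x) (conjugator d n) = ?y - w + shift_down d n w"
    using xc y n_ge_2 t_carrier unfolding w_def
    by (subst rmult_conjugator) (auto simp: coord_subspace_def shift_up_def shift_down_def
        intro!: eq_vecI)
  ultimately show ?thesis
    using xc t_carrier unfolding T_def
    by (simp add: rmult_mult[of _ d] mult_carrier_mat[of _ d d])
qed

lemma rmult_T_in_coord_subspace:
  assumes x: "x \<in> coord_subspace d n"
  shows "rmult x T \<in> coord_subspace d (min (2 * n - 1) d)"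
  using rmult_T_on_coord_subspace[OF x] rmult_t_in_coord_subspace[OF x] n_ge_2
  by (auto simp: coord_subspace_def shift_up_def shift_down_def)

lemma V_plus_VT_carrier: "V_plus_VT \<subseteq> carrier_vec d"
  unfolding V_plus_VT_def subsum_def coord_subspace_def by auto

lemma coord_subspace_subset_V_plus_VT: "coord_subspace d n \<subseteq> V_plus_VT"
proof
  fix u :: "'a vec" assume u: "u \<in> coord_subspace d n"
  have "u = u + rmult (0\<^sub>v d) T" and "0\<^sub>v d \<in> coord_subspace d n"
    using u by (auto simp: coord_subspace_def rmult_def)
  then show "u \<in> V_plus_VT" using u unfolding V_plus_VT_def subsum_def by blast
qed

lemma V_plus_VT_add:
  assumes "a \<in> V_plus_VT" "b \<in> V_plus_VT"
  shows "a + b \<in> V_plus_VT"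
proof -
  obtain u1 w1 u2 w2 where
    a: "a = u1 + rmult w1 T" and b: "b = u2 + rmult w2 T"
    and in_V: "u1 \<in> coord_subspace d n" "w1 \<in> coord_subspace d n"
      "u2 \<in> coord_subspace d n" "w2 \<in> coord_subspace d n"
    using assms unfolding V_plus_VT_def subsum_def by auto
  moreover have "rmult (w1 + w2) T = rmult w1 T + rmult w2 T"
    using in_V by (simp add: rmult_add[OF T_carrier] coord_subspace_def)
  ultimately have "a + b = (u1 + u2) + rmult (w1 + w2) T"
    by (intro eq_vecI) (auto simp: coord_subspace_def)
  moreover have "u1 + u2 \<in> coord_subspace d n" "w1 + w2 \<in> coord_subspace d n"
    using in_V by (auto simp: coord_subspace_def)
  ultimately show ?thesis unfolding V_plus_VT_def subsum_def by blast
qed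

lemma V_plus_VT_smult:
  assumes "a \<in> V_plus_VT"
  shows "c \<cdot>\<^sub>v a \<in> V_plus_VT"
proof -
  obtain u w where a: "a = u + rmult w T"
    and in_V: "u \<in> coord_subspace d n" "w \<in> coord_subspace d n"
    using assms unfolding V_plus_VT_def subsum_def by auto
  moreover have "rmult (c \<cdot>\<^sub>v w) T = c \<cdot>\<^sub>v rmult w T"
    using in_V by (simp add: rmult_smult[OF T_carrier] coord_subspace_def)
  ultimately have "c \<cdot>\<^sub>v a = c \<cdot>\<^sub>v u + rmult (c \<cdot>\<^sub>v w) T"
    by (intro eq_vecI) (auto simp: coord_subspace_def algebra_simps)
  moreover have "c \<cdot>\<^sub>v u \<in> coord_subspace d n" "c \<cdot>\<^sub>v w \<in> coord_subspace d n"
    using in_V by (auto simp: coord_subspace_def)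
  ultimately show ?thesis unfolding V_plus_VT_def subsum_def by blast
qed

lemma V_plus_VT_diff:
  assumes "a \<in> V_plus_VT" "b \<in> V_plus_VT"
  shows "a - b \<in> V_plus_VT"
proof -
  have "a - b = a + (-1) \<cdot>\<^sub>v b"
    using assms V_plus_VT_carrier by (intro eq_vecI) auto
  then show ?thesis using assms by (simp add: V_plus_VT_add V_plus_VT_smult)
qed

lemma shift_up_diff_in_V_plus_VT:
  assumes x: "x \<in> coord_subspace d n"
  shows "shift_up d n (rmult x t - x) \<in> V_plus_VT"
proof -
  let ?w = "shift_up d n (rmult x t - x)"
  have "rmult x t + shift_down d n ?w \<in> coord_subspace d n"
    using rmult_t_in_coord_subspace[OF x] by (auto simp: coord_subspace_def shift_down_def)
  moreover have "rmult x T \<in> V_plus_VT"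
    using x unfolding V_plus_VT_def subsum_def coord_subspace_def
    by (intro CollectI exI[of _ "0\<^sub>v d"] exI[of _ "rmult x T"]) auto
  ultimately have "(rmult x t + shift_down d n ?w) - rmult x T \<in> V_plus_VT"
    using coord_subspace_subset_V_plus_VT V_plus_VT_diff by blast
  moreover have "(rmult x t + shift_down d n ?w) - rmult x T = ?w"
    using rmult_T_on_coord_subspace[OF x] rmult_t_in_coord_subspace[OF x] x
    by (intro eq_vecI) (auto simp: coord_subspace_def)
  ultimately show ?thesis by simp
qed

lemma V_plus_VT_eq:
  assumes shifts: "\<And>i. 1 \<le> i \<Longrightarrow> i < n \<Longrightarrow> shift_up d n (unit_vec d i) \<in> V_plus_VT"
  shows "V_plus_VT = coord_subspace d (min (2 * n - 1) d)"
proof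
  show "V_plus_VT \<subseteq> coord_subspace d (min (2 * n - 1) d)"
    using rmult_T_in_coord_subspace coord_subspace_mono[of n "min (2 * n - 1) d" d] n_less_d
    unfolding V_plus_VT_def subsum_def by (fastforce simp: coord_subspace_def)
  have "n \<le> min (2 * n - 1) d" using n_less_d by simp
  then show "coord_subspace d (min (2 * n - 1) d) \<subseteq> V_plus_VT"
  proof (induction rule: dec_induct)
    case base
    show ?case by (rule coord_subspace_subset_V_plus_VT)
  next
    case (step m)
    show ?case
    proof
      fix v :: "'a vec" assume v: "v \<in> coord_subspace d (Suc m)"
      have i: "1 \<le> m + 1 - n" "m + 1 - n < n" "n + (m + 1 - n) - 1 = m"
        using step.hyps by auto
      then have "shift_up d n (unit_vec d (m + 1 - n)) = (unit_vec d m :: 'a vec)"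
        using step.hyps i shift_up_unit_vec[of "m + 1 - n" n d] by simp
      then have "unit_vec d m \<in> V_plus_VT"
        using shifts[OF i(1,2)] by simp
      moreover have "v - v $ m \<cdot>\<^sub>v unit_vec d m \<in> V_plus_VT"
        using coord_subspace_Suc[OF v] step by auto
      moreover have "v = (v - v $ m \<cdot>\<^sub>v unit_vec d m) + v $ m \<cdot>\<^sub>v unit_vec d m"
        using v by (intro eq_vecI) (auto simp: coord_subspace_def)
      ultimately show "v \<in> V_plus_VT"
        by (metis V_plus_VT_add V_plus_VT_smult)
    qed
  qed
qed

lemma Fsub_plus_Fix_T:
  assumes "2 * n - 1 < d"
  shows "subsum (Fsub d n) (Fix d T) = carrier_vec d"
proof
  show "subsum (Fsub d n) (Fix d T) \<subseteq> carrier_vec d"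
    using n_less_d unfolding subsum_def Fix_def Fsub_eq[OF less_imp_le[OF n_less_d]] by auto
next
  show "carrier_vec d \<subseteq> subsum (Fsub d n) (Fix d T)"
  proof
    fix v :: "'a vec" assume v: "v \<in> carrier_vec d"
    define y :: "'a vec" where
      "y = vec d (\<lambda>j. if j < n then v $ j else if j < 2 * n then - v $ (j - n) else 0)"
    define h :: "'a vec" where
      "h = vec d (\<lambda>j. if n \<le> j \<and> j < 2 * n then - v $ (j - n) else 0)"
    have "rmult y (conjugator_inv d n) = h"
      using assms n_ge_2 unfolding y_def h_def
      by (subst rmult_conjugator_inv) (auto simp: shift_up_def shift_down_def intro!: eq_vecI)
    moreover have "rmult h t = h"
      using n_less_d by (intro rmult_t_eq_self) (auto simp: h_def)
    moreover have "rmult h (conjugator d n) = y"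
      using assms n_ge_2 unfolding y_def h_def
      by (subst rmult_conjugator) (auto simp: shift_up_def shift_down_def intro!: eq_vecI)
    ultimately have "rmult y T = y"
      using t_carrier unfolding T_def
      by (simp add: rmult_mult[of _ d] mult_carrier_mat[of _ d d] y_def)
    then have "y \<in> Fix d T" by (simp add: Fix_def y_def)
    moreover have "v - y \<in> Fsub d n"
      using v n_less_d unfolding Fsub_eq[OF less_imp_le[OF n_less_d]] by (simp add: y_def)
    moreover have "v = (v - y) + y"
      using v by (intro eq_vecI) (auto simp: y_def)
    ultimately show "v \<in> subsum (Fsub d n) (Fix d T)"
      unfolding subsum_def by blast
  qed
qed

lemma weak_doubling_T:
  assumes "\<And>i. 1 \<le> i \<Longrightarrow> i < n \<Longrightarrow> shift_up d n (unit_vec d i) \<in> V_plus_VT"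
  shows "weak_doubling d n T"
proof -
  have "coord_subspace d d = (carrier_vec d :: 'a vec set)"
    by (auto simp: coord_subspace_def)
  then have "subdim d (carrier_vec d :: 'a vec set) = d"
    using subdim_coord_subspace[of d d, where 'a = 'a] by simp
  then show ?thesis
    using V_plus_VT_eq[OF assms] Fsub_plus_Fix_T subdim_coord_subspace[of "min (2 * n - 1) d" d, where 'a = 'a]
      Vsub_eq_coord_subspace[of n d, where 'a = 'a] n_less_d
    unfolding weak_doubling_def Let_def V_plus_VT_def by auto
qed

lemma shift_up_telescope:
  assumes chain: "\<And>i. 2 \<le> i \<Longrightarrow> i < n \<Longrightarrow>
      shift_up d n (unit_vec d (i - 1) - unit_vec d i) \<in> V_plus_VT"
    and i: "1 \<le> i" "i < n"
  shows "shift_up d n (unit_vec d 1 - unit_vec d i) \<in> V_plus_VT"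
  using i(1)
proof (induction rule: dec_induct)
  case base
  have "shift_up d n (unit_vec d 1 - unit_vec d 1 :: 'a vec) \<in> coord_subspace d n"
    by (simp add: coord_subspace_def shift_up_def)
  then show ?case using coord_subspace_subset_V_plus_VT by blast
next
  case (step m)
  have eq: "shift_up d n (unit_vec d 1 - unit_vec d (Suc m) :: 'a vec)
      = shift_up d n (unit_vec d 1 - unit_vec d m) + shift_up d n (unit_vec d m - unit_vec d (Suc m))"
    by (intro eq_vecI) (auto simp: shift_up_def)
  have "shift_up d n (unit_vec d m - unit_vec d (Suc m)) \<in> V_plus_VT"
    using chain[of "Suc m"] step.hyps i(2) by simp
  then show ?case
    unfolding eq by (rule V_plus_VT_add[OF step.IH])
qed

lemma weak_doubling_T_of_chain:
  assumes chain: "\<And>i. 2 \<le> i \<Longrightarrow> i < n \<Longrightarrow>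
      shift_up d n (unit_vec d (i - 1) - unit_vec d i) \<in> V_plus_VT"
    and first: "shift_up d n (unit_vec d 1) \<in> V_plus_VT"
  shows "weak_doubling d n T"
proof (rule weak_doubling_T)
  fix i assume i: "1 \<le> i" "i < n"
  have "shift_up d n (unit_vec d i :: 'a vec)
      = shift_up d n (unit_vec d 1) - shift_up d n (unit_vec d 1 - unit_vec d i)"
    by (intro eq_vecI) (auto simp: shift_up_def)
  then show "shift_up d n (unit_vec d i) \<in> V_plus_VT"
    using V_plus_VT_diff[OF first shift_up_telescope[OF chain i]] by metis
qed

end

lemma blockdiag_id_index:
  assumes "z \<in> carrier_mat n n" "n \<le> d" "i < d" "j < d"
  shows "blockdiag_id d n z $$ (i, j) =
    (if i < n \<and> j < n then z $$ (i, j) else if i = j \<and> n \<le> i then 1 else 0)"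
  using assms unfolding blockdiag_id_def by auto

lemma block_diag_identity_blockdiag_id:
  assumes "z \<in> carrier_mat n n" "2 \<le> n" "n < d"
  shows "block_diag_identity d n (blockdiag_id d n z)"
  using assms by unfold_locales (auto simp: blockdiag_id_index blockdiag_id_def)

lemma rmult_unit_vec_blockdiag_id:
  assumes "z \<in> carrier_mat n n" "n \<le> d" "i < n"
  shows "rmult (unit_vec d i) (blockdiag_id d n z) = vec d (\<lambda>j. if j < n then z $$ (i, j) else 0)"
  using assms by (subst rmult_unit_vec[of _ d])
    (auto simp: blockdiag_id_index blockdiag_id_def intro!: eq_vecI)

lemma block_diag_identity_Eij: "2 < d \<Longrightarrow> block_diag_identity d 2 (Eij d 0 1 1)"
  by unfold_locales (auto simp: Eij_def)

lemma z1_carrier: "z1 n \<in> carrier_mat n n"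
  unfolding z1_def perm_mat_def by auto

lemma z2_carrier: "z2 n \<in> carrier_mat n n"
  unfolding z2_def perm_mat_def by auto

lemma z1_index:
  "odd n \<Longrightarrow> i < n \<Longrightarrow> j < n \<Longrightarrow> z1 n $$ (i, j) = (if j = cyc1 n i then 1 else 0)"
  by (simp add: z1_def perm_mat_def)

lemma z2_index:
  "odd n \<Longrightarrow> i < n \<Longrightarrow> j < n \<Longrightarrow>
    z2 n $$ (i, j) = (if (i, j) = (1, n - 1) then -1 else if j = cyc2 n i then 1 else 0)"
  by (auto simp: z2_def perm_mat_def update_mat_def cyc2_def)

lemma weak_doubling_conj_Eij:
  assumes "2 < d"
  shows "weak_doubling d 2 (conjugator_inv d 2 * Eij d 0 1 1 * conjugator d 2 :: 'a::field mat)"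
proof -
  interpret block_diag_identity d 2 "Eij d 0 1 1 :: 'a mat"
    using assms by (rule block_diag_identity_Eij)
  have "rmult (unit_vec d 0) (Eij d 0 1 1) - unit_vec d 0 = (unit_vec d 1 :: 'a vec)"
    using assms by (subst rmult_unit_vec[of _ d]) (auto simp: Eij_def intro!: eq_vecI)
  then have "shift_up d 2 (unit_vec d 1 :: 'a vec) \<in> V_plus_VT"
    using shift_up_diff_in_V_plus_VT[of "unit_vec d 0"] assms by simp
  then show ?thesis
    using weak_doubling_T_of_chain unfolding T_def by simp
qed

lemma weak_doubling_conj_z1:
  assumes "odd n" "2 \<le> n" "n < d"
  shows "weak_doubling d n (conjugator_inv d n * blockdiag_id d n (z1 n) * conjugator d n :: 'a::field mat)"
proof -
  let ?t = "blockdiag_id d n (z1 n) :: 'a mat"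
  interpret block_diag_identity d n ?t
    using assms z1_carrier by (intro block_diag_identity_blockdiag_id)
  have "rmult (unit_vec d i) ?t = unit_vec d (i - 1)" if "1 \<le> i" "i < n" for i
    using that assms rmult_unit_vec_blockdiag_id[OF z1_carrier, of n d, where 'a = 'a]
    by (auto simp: z1_index cyc1_def intro!: eq_vecI)
  then have diff: "shift_up d n (unit_vec d (i - 1) - unit_vec d i) \<in> V_plus_VT"
    if "1 \<le> i" "i < n" for i
    using shift_up_diff_in_V_plus_VT[of "unit_vec d i"] that assms by simp
  have "shift_up d n (unit_vec d 1 :: 'a vec) = (-1) \<cdot>\<^sub>v shift_up d n (unit_vec d 0 - unit_vec d 1)"
    using assms by (intro eq_vecI) (auto simp: shift_up_def)
  then have "shift_up d n (unit_vec d 1 :: 'a vec) \<in> V_plus_VT"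
    using V_plus_VT_smult diff[of 1] assms by simp
  then show ?thesis
    using weak_doubling_T_of_chain diff unfolding T_def by simp
qed

lemma weak_doubling_conj_z2:
  assumes "odd n" "2 \<le> n" "n < d" and two: "(2 :: 'a::field) \<noteq> 0"
  shows "weak_doubling d n (conjugator_inv d n * blockdiag_id d n (z2 n) * conjugator d n :: 'a mat)"
proof -
  let ?t = "blockdiag_id d n (z2 n) :: 'a mat"
  interpret block_diag_identity d n ?t
    using assms z2_carrier by (intro block_diag_identity_blockdiag_id)
  have n3: "3 \<le> n" using assms by presburger
  have "rmult (unit_vec d i) ?t = unit_vec d (i - 1)" if "2 \<le> i" "i < n" for i
    using that assms rmult_unit_vec_blockdiag_id[OF z2_carrier, of n d, where 'a = 'a]
    by (auto simp: z2_index cyc2_def intro!: eq_vecI)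
  then have chain: "shift_up d n (unit_vec d (i - 1) - unit_vec d i) \<in> V_plus_VT"
    if "2 \<le> i" "i < n" for i
    using shift_up_diff_in_V_plus_VT[of "unit_vec d i"] that assms by simp
  have "rmult (unit_vec d 1) ?t = (-1) \<cdot>\<^sub>v unit_vec d (n - 1)"
    using n3 assms rmult_unit_vec_blockdiag_id[OF z2_carrier, of n d, where 'a = 'a]
    by (auto simp: z2_index cyc2_def intro!: eq_vecI)
  then have wrap: "shift_up d n ((-1) \<cdot>\<^sub>v unit_vec d (n - 1) - unit_vec d 1) \<in> V_plus_VT"
    using shift_up_diff_in_V_plus_VT[of "unit_vec d 1"] n3 assms by simp
  have "shift_up d n (unit_vec d 1 - unit_vec d (n - 1)) \<in> V_plus_VT"
    using shift_up_telescope[OF chain] n3 by simp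
  moreover have "shift_up d n (unit_vec d 1 :: 'a vec) = (1 / 2) \<cdot>\<^sub>v
      (shift_up d n (unit_vec d 1 - unit_vec d (n - 1))
       - shift_up d n ((-1) \<cdot>\<^sub>v unit_vec d (n - 1) - unit_vec d 1))"
    using two by (intro eq_vecI) (auto simp: shift_up_def field_simps)
  ultimately have "shift_up d n (unit_vec d 1 :: 'a vec) \<in> V_plus_VT"
    using V_plus_VT_smult V_plus_VT_diff wrap by simp
  then show ?thesis
    using weak_doubling_T_of_chain chain unfolding T_def by simp
qed

lemma two_neq_zero_if_CHAR_neq_2:
  assumes "CHAR('a::field) \<noteq> 2"
  shows "(2 :: 'a) \<noteq> 0"
proof
  assume "(2 :: 'a) = 0"
  then have dvd: "CHAR('a) dvd 2" using of_nat_eq_0_iff_char_dvd[where 'a = 'a, of 2] by simp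
  then have "CHAR('a) \<noteq> 0" by (metis dvd_0_left_iff zero_neq_numeral)
  moreover have "CHAR('a) \<le> 2" using dvd by (simp add: dvd_imp_le)
  ultimately show False using assms CHAR_not_1 by (simp add: le_Suc_eq numeral_2_eq_2)
qed

theorem lemma7p7:
  fixes d n :: nat
  assumes "2 \<le> n" and "n < d" and "n = 2 \<or> odd n"
  shows "\<exists>E :: 'a::{field,finite} mat. E \<in> carrier_mat d d \<and> det E = 1 \<and>
           weak_doubling d n (the (mat_inverse E) * t_elem d n * E)"
proof -
  have "weak_doubling d n (conjugator_inv d n * t_elem d n * conjugator d n :: 'a mat)"
  proof (cases "n = 2")
    case True
    then show ?thesis using assms weak_doubling_conj_Eij by (simp add: t_elem_def)
  next
    case False
    then show ?thesis
      using assms weak_doubling_conj_z1[where 'a = 'a] weak_doubling_conj_z2[where 'a = 'a]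
        two_neq_zero_if_CHAR_neq_2[where 'a = 'a]
      by (simp add: t_elem_def)
  qed
  then show ?thesis
    using assms by (intro exI[of _ "conjugator d n"]) (simp add: det_conjugator mat_inverse_conjugator)
qed

end
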